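(* The set of limsup functions $X \to \mathbb{R}$ is the smallest collection $\mathcal{C}$ of functions $X \to \mathbb{R}$ such that (a) $\mathcal{C}$ contains all lower semicontinuous functions $X \to \mathbb{R}$, and (b) $\mathcal{C}$ is closed under pointwise limits from above, i.e. whenever $f_0 \ge f_1 \ge \cdots$ are in $\mathcal{C}$ and converge pointwise to a function $f : X \to \mathbb{R}$, then $f \in \mathcal{C}$.
   Context: Let $A$ be a non-empty countable set and $T$ a pruned tree on $A$ (a set of finite sequences of elements of $A$, closed under initial segments, in which every sequence has a proper extension in $T$). Let $X$ be the set of infinite branches of $T$, with the topology generated by the cylinder sets $O(s) = \{x \in X : s \text{ is an initial segment of } x\}$, $s \in T$. A function $f : X \to \mathbb{R}$ is a limsup function if there exists $u : T \to \mathbb{R}$ with $f(x) = \limsup_{t\to\infty} u(x_0,\dots,x_t)$ for every $x \in X$. *)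

theory Defs
  imports "HOL-Analysis.Analysis" "HOL-Library.Liminf_Limsup"
begin

text \<open>Finite sequences are lists; the initial segment of length n of an
  infinite sequence x :: nat => 'a is map x [0..<n].\<close>

definition pruned_tree :: "'a set \<Rightarrow> 'a list set \<Rightarrow> bool" where
  "pruned_tree A T \<longleftrightarrow> T \<subseteq> lists A
     \<and> (\<forall>s\<in>T. \<forall>n. take n s \<in> T)
     \<and> (\<forall>s\<in>T. \<exists>s'\<in>T. length s < length s' \<and> take (length s) s' = s)"

definition branches :: "'a list set \<Rightarrow> (nat \<Rightarrow> 'a) set" where
  "branches T = {x. \<forall>n. map x [0..<n] \<in> T}"

definition cyl :: "'a list set \<Rightarrow> 'a list \<Rightarrow> (nat \<Rightarrow> 'a) set" where
  "cyl T s = {x \<in> branches T. map x [0..<length s] = s}"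

definition branch_topology :: "'a list set \<Rightarrow> (nat \<Rightarrow> 'a) topology" where
  "branch_topology T = topology_generated_by (cyl T ` T)"

definition lower_semicont :: "'b topology \<Rightarrow> ('b \<Rightarrow> real) \<Rightarrow> bool" where
  "lower_semicont Y f \<longleftrightarrow> (\<forall>c. openin Y {x \<in> topspace Y. c < f x})"

text \<open>Functions X -> R are represented as extensional functions on X (value undefined off X).\<close>

definition limsup_function :: "'a list set \<Rightarrow> ((nat \<Rightarrow> 'a) \<Rightarrow> real) \<Rightarrow> bool" where
  "limsup_function T f \<longleftrightarrow> (\<exists>u :: 'a list \<Rightarrow> real. \<forall>x\<in>branches T.
      ereal (f x) = limsup (\<lambda>t. ereal (u (map x [0..<Suc t]))))"

definition good_collection :: "'a list set \<Rightarrow> ((nat \<Rightarrow> 'a) \<Rightarrow> real) set \<Rightarrow> bool" where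
  "good_collection T C \<longleftrightarrow>
     C \<subseteq> branches T \<rightarrow>\<^sub>E (UNIV :: real set)
   \<and> (\<forall>f \<in> branches T \<rightarrow>\<^sub>E (UNIV :: real set).
        lower_semicont (branch_topology T) f \<longrightarrow> f \<in> C)
   \<and> (\<forall>(fs :: nat \<Rightarrow> (nat \<Rightarrow> 'a) \<Rightarrow> real) f.
        (\<forall>n. fs n \<in> C) \<and> (\<forall>n. \<forall>x\<in>branches T. fs (Suc n) x \<le> fs n x)
        \<and> f \<in> branches T \<rightarrow>\<^sub>E (UNIV :: real set)
        \<and> (\<forall>x\<in>branches T. (\<lambda>n. fs n x) \<longlonglongrightarrow> f x)
        \<longrightarrow> f \<in> C)"

end

theory Submission
  imports Defs
begin

text \<open>Both inclusions pass through the functions f that are pointwise infima of sequences of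
  lower semicontinuous functions h k : X \<rightarrow> [-\<infinity>, \<infinity>]. This class contains the lower semicontinuous
  functions and is closed under decreasing limits, since an infimum of countably many such infima
  is again one. A limsup function is the infimum of its tail suprema, which are lower
  semicontinuous (they only look at finite initial segments); being finite and decreasing to f,
  they also show that every limsup function lies in any collection satisfying (a) and (b).

  Conversely, let f = inf h k with h k lower semicontinuous and decreasing. For each rational q,
  count along a branch the largest level m for which the current cylinder satisfies h m > q. By
  lower semicontinuity this counter is unbounded when q < f x, while a counter reaching level M + 1
  forces q < h M x. Letting u(s) be the largest rational whose counter increases at s (among those
  whose code in an enumeration of the rationals is below their counter) turns "the counter of q is
  unbounded" into "u \<ge> q infinitely often", so that limsup u = f.\<close>

section \<open>Counters and limits superior of real sequences\<close>

lemma mono_nat_crossing: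
  fixes g :: "nat \<Rightarrow> nat"
  assumes "mono g" "g N \<le> K" "K < g n"
  shows "\<exists>t\<ge>N. g t \<le> K \<and> K < g (Suc t)"
proof -
  define m where "m = (LEAST m. K < g m)"
  have "K < g m"
    unfolding m_def by (rule LeastI) (rule assms(3))
  have "N < m"
  proof (rule ccontr)
    assume "\<not> N < m"
    then have "g m \<le> g N"
      using monoD[OF assms(1)] by simp
    with \<open>K < g m\<close> assms(2) show False
      by simp
  qed
  then obtain t where "m = Suc t" "N \<le> t"
    by (cases m) auto
  moreover have "g t \<le> K"
    using not_less_Least[of t "\<lambda>m. K < g m"] \<open>m = Suc t\<close> m_def by simp
  ultimately show ?thesis
    using \<open>K < g m\<close> by blast
qed

lemma mono_nat_unbounded_if_frequently_increasing:
  fixes g :: "nat \<Rightarrow> nat"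
  assumes "mono g" "\<exists>\<^sub>F t in sequentially. g t < g (Suc t)"
  shows "\<exists>n. M \<le> g n"
proof (induction M)
  case (Suc M)
  then obtain n where n: "M \<le> g n" by blast
  from assms(2) obtain t where "n \<le> t" "g t < g (Suc t)"
    unfolding frequently_sequentially by blast
  with n monoD[OF assms(1), of n t] show ?case by (intro exI[of _ "Suc t"]) simp
qed simp

lemma limsup_ereal_eqI:
  fixes a :: "nat \<Rightarrow> real"
  assumes lower: "\<And>q. real_of_rat q < y \<Longrightarrow> \<exists>\<^sub>F t in sequentially. real_of_rat q \<le> a t"
    and upper: "\<And>r. \<exists>\<^sub>F t in sequentially. r \<le> a t \<Longrightarrow> r \<le> y"
  shows "limsup (\<lambda>t. ereal (a t)) = ereal y"
proof (rule antisym)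
  show "limsup (\<lambda>t. ereal (a t)) \<le> ereal y"
  proof (rule ccontr)
    assume "\<not> ?thesis"
    then have "ereal y < limsup (\<lambda>t. ereal (a t))"
      by simp
    then obtain z where z: "ereal y < ereal z" "ereal z < limsup (\<lambda>t. ereal (a t))"
      by (blast dest: ereal_dense2)
    then obtain w where w: "ereal z < w" "\<not> (\<forall>\<^sub>F t in sequentially. ereal (a t) < w)"
      using Limsup_le_iff[where C="ereal z" and F=sequentially and X="\<lambda>t. ereal (a t)"] by auto
    have "\<exists>\<^sub>F t in sequentially. z \<le> a t"
      using w(2) unfolding not_eventually
      by (rule frequently_elim1) (use w(1) in \<open>auto simp: not_less dest: order.strict_trans2\<close>)
    with upper z(1) show False by fastforce
  qed
  show "ereal y \<le> limsup (\<lambda>t. ereal (a t))"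
  proof (rule ccontr)
    assume "\<not> ?thesis"
    then have "limsup (\<lambda>t. ereal (a t)) < ereal y"
      by simp
    then obtain z where z: "limsup (\<lambda>t. ereal (a t)) < ereal z" "ereal z < ereal y"
      by (blast dest: ereal_dense2)
    obtain q where q: "z < real_of_rat q" "real_of_rat q < y"
      using of_rat_dense z(2) by auto
    have "\<forall>\<^sub>F t in sequentially. a t < real_of_rat q"
      using Limsup_lessD[OF order.strict_trans[OF z(1)], of "ereal (real_of_rat q)"] q(1) by simp
    then have "\<forall>\<^sub>F t in sequentially. \<not> real_of_rat q \<le> a t"
      by (auto elim: eventually_mono)
    with lower[OF q(2)] show False
      by (simp add: frequently_def)
  qed
qed

text \<open>The code bound to_nat q \<le> c q (Suc t) leaves only finitely many candidates below any
  level, so a value that recurs infinitely often comes from a single counter that keeps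
  increasing. The default -(t + 1) tends to -\<infinity>.\<close>

definition counter_jump_max :: "(rat \<Rightarrow> nat \<Rightarrow> nat) \<Rightarrow> nat \<Rightarrow> real" where
  "counter_jump_max c t = Max (insert (- real (Suc t))
     {real_of_rat q | q. to_nat q \<le> c q (Suc t) \<and> c q t < c q (Suc t)})"

lemma finite_to_nat_le: "finite {q :: rat. to_nat q \<le> n}"
proof -
  have "{q :: rat. to_nat q \<le> n} = to_nat -` {..n}"
    by auto
  then show ?thesis
    using finite_vimageI[OF finite_atMost inj_to_nat] by simp
qed

context
  fixes c :: "rat \<Rightarrow> nat \<Rightarrow> nat"
  assumes mono_counter: "\<And>q. mono (c q)"
    and counter_le: "\<And>q n. c q n \<le> n"
begin

lemma finite_counter_jumps:
  "finite {real_of_rat q | q. to_nat q \<le> c q (Suc t) \<and> c q t < c q (Suc t)}"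
proof -
  have "{real_of_rat q | q. to_nat q \<le> c q (Suc t) \<and> c q t < c q (Suc t)}
      \<subseteq> real_of_rat ` {q. to_nat q \<le> Suc t}"
    using le_trans[OF _ counter_le] by blast
  then show ?thesis
    by (rule finite_subset) (simp add: finite_to_nat_le)
qed

lemma counter_jump_max_ge:
  assumes "to_nat q \<le> c q (Suc t)" "c q t < c q (Suc t)"
  shows "real_of_rat q \<le> counter_jump_max c t"
  unfolding counter_jump_max_def using assms finite_counter_jumps by (intro Max_ge) auto

lemma counter_jump_max_witness:
  assumes "- real (Suc t) < counter_jump_max c t"
  obtains q where "counter_jump_max c t = real_of_rat q" "to_nat q \<le> c q (Suc t)"
    "c q t < c q (Suc t)"
proof -
  have "counter_jump_max c t \<in> insert (- real (Suc t))
     {real_of_rat q | q. to_nat q \<le> c q (Suc t) \<and> c q t < c q (Suc t)}"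
    unfolding counter_jump_max_def using finite_counter_jumps by (intro Max_in) auto
  with assms that show ?thesis
    by auto
qed

lemma frequently_counter_jump_max_ge:
  assumes unbounded: "\<And>M. \<exists>n. M \<le> c q n"
  shows "\<exists>\<^sub>F t in sequentially. real_of_rat q \<le> counter_jump_max c t"
  unfolding frequently_sequentially
proof
  fix N
  define K where "K = max (to_nat q) (c q N)"
  obtain n where "K < c q n"
    using unbounded[of "Suc K"] by (auto simp: Suc_le_eq)
  with mono_nat_crossing[OF mono_counter[of q], of N K n]
  obtain t where "N \<le> t" "c q t \<le> K" "K < c q (Suc t)"
    by (auto simp: K_def)
  moreover have "real_of_rat q \<le> counter_jump_max c t"
    using calculation by (intro counter_jump_max_ge) (auto simp: K_def)
  ultimately show "\<exists>t\<ge>N. real_of_rat q \<le> counter_jump_max c t"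
    by blast
qed

lemma frequently_counter_jump_max_ge_imp_large:
  assumes frequent: "\<exists>\<^sub>F t in sequentially. r \<le> counter_jump_max c t"
  shows "\<exists>q n. r \<le> real_of_rat q \<and> M \<le> c q n"
proof (rule ccontr)
  assume contra: "\<not> ?thesis"
  have small: "c q n < M" if "r \<le> real_of_rat q" for q n
  proof (rule ccontr)
    assume "\<not> c q n < M"
    with that contra show False
      by (auto simp: not_less)
  qed
  define Q where "Q = {q. to_nat q \<le> M \<and> r \<le> real_of_rat q}"
  obtain N :: nat where "- r < real N"
    using reals_Archimedean2 by blast
  then have "\<forall>\<^sub>F t in sequentially. - real (Suc t) < r"
    unfolding eventually_sequentially by (intro exI[of _ N]) auto
  with frequent have jumps: "\<exists>\<^sub>F t in sequentially. \<exists>q\<in>Q. c q t < c q (Suc t)"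
  proof (rule frequently_eventually_frequently[THEN frequently_elim1])
    fix t assume t: "r \<le> counter_jump_max c t \<and> - real (Suc t) < r"
    then have "- real (Suc t) < counter_jump_max c t"
      by linarith
    then obtain q where q: "counter_jump_max c t = real_of_rat q" "to_nat q \<le> c q (Suc t)"
      "c q t < c q (Suc t)"
      by (rule counter_jump_max_witness)
    with t have "r \<le> real_of_rat q"
      by simp
    with q small[of q "Suc t"] have "q \<in> Q"
      by (simp add: Q_def)
    with q(3) show "\<exists>q\<in>Q. c q t < c q (Suc t)" ..
  qed
  have "finite Q"
    using finite_to_nat_le[of M] by (rule finite_subset[rotated]) (auto simp: Q_def)
  from frequently_bex_finite[OF this jumps]
  obtain q where "q \<in> Q" "\<exists>\<^sub>F t in sequentially. c q t < c q (Suc t)"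
    by blast
  then obtain n where "M \<le> c q n"
    using mono_nat_unbounded_if_frequently_increasing[OF mono_counter[of q]] by blast
  with small[of q n] \<open>q \<in> Q\<close> show False
    by (simp add: Q_def)
qed

end

section \<open>Cylinders and lower semicontinuity\<close>

abbreviation init_seg :: "(nat \<Rightarrow> 'a) \<Rightarrow> nat \<Rightarrow> 'a list" where
  "init_seg x n \<equiv> map x [0..<n]"

lemma cyl_init_seg: "cyl T (init_seg x n) = {y \<in> branches T. \<forall>i<n. y i = x i}"
  by (auto simp: cyl_def)

lemma cyl_init_seg_antimono: "m \<le> n \<Longrightarrow> cyl T (init_seg x n) \<subseteq> cyl T (init_seg x m)"
  by (auto simp: cyl_init_seg)

lemma in_cyl_init_seg: "x \<in> branches T \<Longrightarrow> x \<in> cyl T (init_seg x n)"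
  by (simp add: cyl_init_seg)

lemma topspace_branch_topology: "topspace (branch_topology T) = branches T"
proof -
  have "\<Union>(cyl T ` T) = branches T"
    using in_cyl_init_seg[of _ T 0] by (auto simp: cyl_def branches_def)
  then show ?thesis
    by (simp add: branch_topology_def)
qed

lemma openin_branch_topology_cyl:
  assumes "x \<in> branches T"
  shows "openin (branch_topology T) (cyl T (init_seg x n))"
proof -
  have "init_seg x n \<in> T"
    using assms by (simp add: branches_def)
  then show ?thesis
    unfolding branch_topology_def openin_topology_generated_by_iff
    by (blast intro: generate_topology_on.Basis)
qed

lemma openin_branch_topology_imp_cyl:
  assumes "openin (branch_topology T) U" "x \<in> U"
  shows "\<exists>n. cyl T (init_seg x n) \<subseteq> U"
proof -
  have "generate_topology_on (cyl T ` T) U"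
    using assms(1) by (simp add: branch_topology_def openin_topology_generated_by_iff)
  then show ?thesis
    using assms(2)
  proof (induction arbitrary: x rule: generate_topology_on.induct)
    case (Int U V)
    from Int.IH(1)[of x] Int.prems obtain m where "cyl T (init_seg x m) \<subseteq> U"
      by blast
    moreover from Int.IH(2)[of x] Int.prems obtain n where "cyl T (init_seg x n) \<subseteq> V"
      by blast
    ultimately have "cyl T (init_seg x (max m n)) \<subseteq> U \<inter> V"
      using cyl_init_seg_antimono[of m "max m n" T x] cyl_init_seg_antimono[of n "max m n" T x]
      by auto
    then show ?case ..
  next
    case (UN K)
    then obtain U where "U \<in> K" "x \<in> U"
      by blast
    with UN.IH obtain n where "cyl T (init_seg x n) \<subseteq> U"
      by blast
    with \<open>U \<in> K\<close> show ?case
      by blast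
  next
    case (Basis U)
    then obtain s where "U = cyl T s"
      by blast
    with Basis.prems have "init_seg x (length s) = s"
      by (simp add: cyl_def)
    with \<open>U = cyl T s\<close> show ?case
      by (intro exI[of _ "length s"]) simp
  qed simp
qed

text \<open>Lower semicontinuity for the cylinder topology, for values in any linear order, so that it
  also covers functions into the extended reals.\<close>

definition cyl_lsc :: "'a list set \<Rightarrow> ((nat \<Rightarrow> 'a) \<Rightarrow> 'b::linorder) \<Rightarrow> bool" where
  "cyl_lsc T g \<longleftrightarrow>
     (\<forall>x\<in>branches T. \<forall>c. c < g x \<longrightarrow> (\<exists>n. \<forall>y\<in>cyl T (init_seg x n). c < g y))"

lemma lower_semicont_iff_cyl_lsc:
  "lower_semicont (branch_topology T) g \<longleftrightarrow> cyl_lsc T g"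
proof
  assume lsc: "lower_semicont (branch_topology T) g"
  show "cyl_lsc T g"
    unfolding cyl_lsc_def
  proof (intro ballI allI impI)
    fix x c assume "x \<in> branches T" "c < g x"
    moreover have "openin (branch_topology T) {y \<in> branches T. c < g y}"
      using lsc by (simp add: lower_semicont_def topspace_branch_topology)
    ultimately obtain n where "cyl T (init_seg x n) \<subseteq> {y \<in> branches T. c < g y}"
      using openin_branch_topology_imp_cyl by blast
    then show "\<exists>n. \<forall>y\<in>cyl T (init_seg x n). c < g y"
      by blast
  qed
next
  assume "cyl_lsc T g"
  show "lower_semicont (branch_topology T) g"
    unfolding lower_semicont_def topspace_branch_topology
  proof (intro allI openin_subopen[THEN iffD2] ballI)
    fix c x assume "x \<in> {y \<in> branches T. c < g y}"
    with \<open>cyl_lsc T g\<close> obtain n where "\<forall>y\<in>cyl T (init_seg x n). c < g y"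
      unfolding cyl_lsc_def by blast
    then show "\<exists>U. openin (branch_topology T) U \<and> x \<in> U \<and> U \<subseteq> {y \<in> branches T. c < g y}"
      using \<open>x \<in> _\<close> openin_branch_topology_cyl in_cyl_init_seg
      by (intro exI[of _ "cyl T (init_seg x n)"]) (auto simp: cyl_def)
  qed
qed

lemma cyl_lsc_cong:
  "(\<And>x. x \<in> branches T \<Longrightarrow> g x = g' x) \<Longrightarrow> cyl_lsc T g \<longleftrightarrow> cyl_lsc T g'"
  unfolding cyl_lsc_def cyl_def by simp

lemma cyl_lsc_ereal_iff: "cyl_lsc T (\<lambda>x. ereal (g x)) \<longleftrightarrow> cyl_lsc T g"
proof
  assume ereal: "cyl_lsc T (\<lambda>x. ereal (g x))"
  show "cyl_lsc T g"
    unfolding cyl_lsc_def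
  proof (intro ballI allI impI)
    fix x c assume "x \<in> branches T" "c < g x"
    with ereal obtain n where "\<forall>y\<in>cyl T (init_seg x n). ereal c < ereal (g y)"
      unfolding cyl_lsc_def by (meson less_ereal.simps(1))
    then show "\<exists>n. \<forall>y\<in>cyl T (init_seg x n). c < g y"
      by auto
  qed
next
  assume real: "cyl_lsc T g"
  show "cyl_lsc T (\<lambda>x. ereal (g x))"
    unfolding cyl_lsc_def
  proof (intro ballI allI impI)
    fix x c assume "x \<in> branches T" "c < ereal (g x)"
    then obtain r where "c < ereal r" "r < g x"
      using ereal_dense2 less_ereal.simps(1) by blast
    with real \<open>x \<in> branches T\<close> obtain n where n: "\<forall>y\<in>cyl T (init_seg x n). r < g y"
      unfolding cyl_lsc_def by blast
    have "\<forall>y\<in>cyl T (init_seg x n). c < ereal (g y)"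
    proof
      fix y assume "y \<in> cyl T (init_seg x n)"
      with n have "ereal r < ereal (g y)"
        by simp
      with \<open>c < ereal r\<close> show "c < ereal (g y)"
        by (rule order.strict_trans)
    qed
    then show "\<exists>n. \<forall>y\<in>cyl T (init_seg x n). c < ereal (g y)" ..
  qed
qed

lemma cyl_lsc_min:
  assumes "cyl_lsc T g" "cyl_lsc T g'"
  shows "cyl_lsc T (\<lambda>x. min (g x) (g' x))"
  unfolding cyl_lsc_def
proof (intro ballI allI impI)
  fix x c assume "x \<in> branches T" "c < min (g x) (g' x)"
  then have "c < g x" "c < g' x"
    by simp_all
  with assms \<open>x \<in> branches T\<close> obtain m n
    where "\<forall>y\<in>cyl T (init_seg x m). c < g y" "\<forall>y\<in>cyl T (init_seg x n). c < g' y"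
    unfolding cyl_lsc_def by meson
  then have "\<forall>y\<in>cyl T (init_seg x (max m n)). c < min (g y) (g' y)"
    using cyl_init_seg_antimono[of m "max m n" T x] cyl_init_seg_antimono[of n "max m n" T x]
    by auto
  then show "\<exists>n. \<forall>y\<in>cyl T (init_seg x n). c < min (g y) (g' y)" ..
qed

section \<open>Infima of sequences of lower semicontinuous functions\<close>

definition inf_of_lsc_seq :: "'a list set \<Rightarrow> ((nat \<Rightarrow> 'a) \<Rightarrow> real) \<Rightarrow> bool" where
  "inf_of_lsc_seq T f \<longleftrightarrow>
     (\<exists>h :: nat \<Rightarrow> (nat \<Rightarrow> 'a) \<Rightarrow> ereal. (\<forall>k. cyl_lsc T (h k)) \<and> (\<forall>x\<in>branches T. (INF k. h k x) = ereal (f x)))"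

lemma inf_of_lsc_seq_decreasing:
  assumes "inf_of_lsc_seq T f"
  obtains h :: "nat \<Rightarrow> (nat \<Rightarrow> 'a) \<Rightarrow> ereal" where "\<And>k. cyl_lsc T (h k)" "\<And>k x. h (Suc k) x \<le> h k x"
    "\<And>x. x \<in> branches T \<Longrightarrow> (INF k. h k x) = ereal (f x)"
proof -
  obtain g :: "nat \<Rightarrow> (nat \<Rightarrow> 'a) \<Rightarrow> ereal" where g: "\<And>k. cyl_lsc T (g k)" "\<And>x. x \<in> branches T \<Longrightarrow> (INF k. g k x) = ereal (f x)"
    using assms unfolding inf_of_lsc_seq_def by blast
  define h where "h k x = (MIN i\<in>{..k}. g i x)" for k x
  have h_Suc: "h (Suc k) x = min (h k x) (g (Suc k) x)" for k x
    unfolding h_def atMost_Suc by (simp add: min.commute)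
  have h_lsc: "cyl_lsc T (h k)" for k
  proof (induction k)
    case 0
    then show ?case
      using g(1) by (simp add: h_def)
  next
    case (Suc k)
    then show ?case
      unfolding h_Suc by (rule cyl_lsc_min) (rule g(1))
  qed
  have h_INF: "(INF k. h k x) = (INF k. g k x)" for x
  proof (rule antisym)
    show "(INF k. h k x) \<le> (INF k. g k x)"
      by (rule INF_mono') (simp add: h_def)
    show "(INF k. g k x) \<le> (INF k. h k x)"
    proof (rule INF_greatest)
      fix k
      show "(INF k. g k x) \<le> h k x"
        unfolding h_def by (rule Min.boundedI) (auto intro: INF_lower)
    qed
  qed
  show ?thesis
    by (rule that[of h]) (simp_all add: h_lsc h_Suc h_INF g(2))
qed

lemma lower_semicont_imp_inf_of_lsc_seq:
  assumes "lower_semicont (branch_topology T) f"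
  shows "inf_of_lsc_seq T f"
  unfolding inf_of_lsc_seq_def
  using assms by (intro exI[of _ "\<lambda>k x. ereal (f x)"]) (simp add: lower_semicont_iff_cyl_lsc cyl_lsc_ereal_iff)

lemma inf_of_lsc_seq_decreasing_limit:
  assumes inf: "\<And>n. inf_of_lsc_seq T (fs n)"
    and dec: "\<And>n x. x \<in> branches T \<Longrightarrow> fs (Suc n) x \<le> fs n x"
    and lim: "\<And>x. x \<in> branches T \<Longrightarrow> (\<lambda>n. fs n x) \<longlonglongrightarrow> f x"
  shows "inf_of_lsc_seq T f"
proof -
  obtain h :: "nat \<Rightarrow> nat \<Rightarrow> (nat \<Rightarrow> 'a) \<Rightarrow> ereal"
    where h: "\<And>n k. cyl_lsc T (h n k)" "\<And>n x. x \<in> branches T \<Longrightarrow> (INF k. h n k x) = ereal (fs n x)"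
    using inf unfolding inf_of_lsc_seq_def by metis
  have "(INF j. case_prod h (prod_decode j) x) = ereal (f x)" if "x \<in> branches T" for x
  proof -
    have "(INF j. case_prod h (prod_decode j) x) = (INF p \<in> range prod_decode. case_prod h p x)"
      by (simp add: image_image)
    also have "\<dots> = (INF n. INF k. h n k x)"
      using INF_pair[of "\<lambda>n k. h n k x" UNIV UNIV] by (simp add: surj_prod_decode split_beta)
    also have "\<dots> = (INF n. ereal (fs n x))"
      using h(2)[OF that] by simp
    also have "\<dots> = ereal (f x)"
    proof (rule LIMSEQ_unique)
      show "(\<lambda>n. ereal (fs n x)) \<longlonglongrightarrow> (INF n. ereal (fs n x))"
        using dec[OF that] by (intro LIMSEQ_INF) (simp add: antimono_iff_le_Suc)
      show "(\<lambda>n. ereal (fs n x)) \<longlonglongrightarrow> ereal (f x)"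
        using lim[OF that] by simp
    qed
    finally show ?thesis .
  qed
  then show ?thesis
    unfolding inf_of_lsc_seq_def using h(1)
    by (intro exI[of _ "\<lambda>j. case_prod h (prod_decode j)"]) (simp add: split_beta)
qed

section \<open>Limsup functions\<close>

definition tail_sup :: "('a list \<Rightarrow> real) \<Rightarrow> nat \<Rightarrow> (nat \<Rightarrow> 'a) \<Rightarrow> ereal" where
  "tail_sup u k x = (SUP t\<in>{k..}. ereal (u (init_seg x (Suc t))))"

lemma cyl_lsc_tail_sup: "cyl_lsc T (tail_sup u k)"
  unfolding cyl_lsc_def
proof (intro ballI allI impI)
  fix x c assume "c < tail_sup u k x"
  then obtain t where "k \<le> t" "c < ereal (u (init_seg x (Suc t)))"
    unfolding tail_sup_def less_SUP_iff by auto
  have "c < tail_sup u k y" if "y \<in> cyl T (init_seg x (Suc t))" for y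
  proof -
    from that have "init_seg y (Suc t) = init_seg x (Suc t)"
      unfolding cyl_init_seg by (simp del: upt_Suc)
    with \<open>c < ereal (u (init_seg x (Suc t)))\<close> have "c < ereal (u (init_seg y (Suc t)))"
      by (simp only:)
    also have "\<dots> \<le> tail_sup u k y"
      unfolding tail_sup_def using \<open>k \<le> t\<close> by (intro SUP_upper) simp
    finally show ?thesis .
  qed
  then show "\<exists>n. \<forall>y\<in>cyl T (init_seg x n). c < tail_sup u k y"
    by blast
qed

lemma INF_tail_sup: "(INF k. tail_sup u k x) = limsup (\<lambda>t. ereal (u (init_seg x (Suc t))))"
  unfolding tail_sup_def by (simp add: limsup_INF_SUP)

lemma limsup_function_imp_inf_of_lsc_seq:
  assumes "limsup_function T f"
  shows "inf_of_lsc_seq T f"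
proof -
  obtain u where "\<forall>x\<in>branches T. ereal (f x) = limsup (\<lambda>t. ereal (u (init_seg x (Suc t))))"
    using assms unfolding limsup_function_def by blast
  then show ?thesis
    unfolding inf_of_lsc_seq_def
    by (intro exI[of _ "tail_sup u"]) (simp add: cyl_lsc_tail_sup INF_tail_sup)
qed

lemma tail_sup_antimono: "k \<le> n \<Longrightarrow> tail_sup u n x \<le> tail_sup u k x"
  unfolding tail_sup_def by (rule SUP_subset_mono) auto

lemma tail_sup_eq_max: "tail_sup u n x = max (ereal (u (init_seg x (Suc n)))) (tail_sup u (Suc n) x)"
proof -
  have "{n..} = insert n {Suc n..}"
    by auto
  then show ?thesis
    unfolding tail_sup_def by (simp add: sup_max)
qed

lemma tail_sup_less_infinity:
  assumes "tail_sup u k x < \<infinity>"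
  shows "tail_sup u n x < \<infinity>"
proof (cases "n \<le> k")
  case True
  then show ?thesis
  proof (induction n rule: inc_induct)
    case (step n)
    then show ?case
      by (subst tail_sup_eq_max) (simp add: max_def)
  qed (rule assms)
next
  case False
  then show ?thesis
    using le_less_trans[OF tail_sup_antimono assms] by simp
qed

lemma tail_sup_finite:
  assumes "(INF k. tail_sup u k x) = ereal y"
  shows "\<bar>tail_sup u n x\<bar> \<noteq> \<infinity>"
proof -
  have "ereal y \<le> tail_sup u n x"
    using assms INF_lower[of n UNIV "\<lambda>k. tail_sup u k x"] by simp
  moreover have "(INF k. tail_sup u k x) < \<infinity>"
    using assms by simp
  then obtain k where "tail_sup u k x < \<infinity>"
    unfolding INF_less_iff by blast
  then have "tail_sup u n x < \<infinity>"
    by (rule tail_sup_less_infinity)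
  ultimately show ?thesis
    by auto
qed

lemma limsup_function_decreasing_lsc_limit:
  assumes "limsup_function T f"
  obtains g :: "nat \<Rightarrow> (nat \<Rightarrow> 'a) \<Rightarrow> real"
  where "\<And>n. g n \<in> branches T \<rightarrow>\<^sub>E (UNIV :: real set)"
    "\<And>n. lower_semicont (branch_topology T) (g n)"
    "\<And>n x. x \<in> branches T \<Longrightarrow> g (Suc n) x \<le> g n x"
    "\<And>x. x \<in> branches T \<Longrightarrow> (\<lambda>n. g n x) \<longlonglongrightarrow> f x"
proof -
  obtain u where "\<forall>x\<in>branches T. ereal (f x) = limsup (\<lambda>t. ereal (u (init_seg x (Suc t))))"
    using assms unfolding limsup_function_def by blast
  then have u: "(INF k. tail_sup u k x) = ereal (f x)" if "x \<in> branches T" for x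
    using that by (simp add: INF_tail_sup)
  define g where "g n = restrict (\<lambda>x. real_of_ereal (tail_sup u n x)) (branches T)" for n
  have g: "ereal (g n x) = tail_sup u n x" if "x \<in> branches T" for n x
    using tail_sup_finite[OF u[OF that]] that by (simp add: g_def ereal_real')
  show ?thesis
  proof
    show "g n \<in> branches T \<rightarrow>\<^sub>E (UNIV :: real set)" for n
      by (simp add: g_def)
    show "lower_semicont (branch_topology T) (g n)" for n
    proof -
      have "cyl_lsc T (\<lambda>x. ereal (g n x))"
        using cyl_lsc_cong[of T "\<lambda>x. ereal (g n x)" "tail_sup u n"] g cyl_lsc_tail_sup by simp
      then show ?thesis
        by (simp add: lower_semicont_iff_cyl_lsc cyl_lsc_ereal_iff)
    qed
    show "g (Suc n) x \<le> g n x" if "x \<in> branches T" for n x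
    proof -
      have "ereal (g (Suc n) x) \<le> ereal (g n x)"
        using tail_sup_antimono[of n "Suc n" u x] g[OF that] by simp
      then show ?thesis
        by simp
    qed
    show "(\<lambda>n. g n x) \<longlonglongrightarrow> f x" if "x \<in> branches T" for x
    proof -
      have "(\<lambda>n. tail_sup u n x) \<longlonglongrightarrow> (INF n. tail_sup u n x)"
        by (intro LIMSEQ_INF) (simp add: antimono_def tail_sup_antimono)
      then have "(\<lambda>n. ereal (g n x)) \<longlonglongrightarrow> ereal (f x)"
        using u[OF that] g[OF that] by simp
      then show ?thesis
        by simp
    qed
  qed
qed

context
  fixes T :: "'a list set" and h :: "nat \<Rightarrow> (nat \<Rightarrow> 'a) \<Rightarrow> ereal" and f :: "(nat \<Rightarrow> 'a) \<Rightarrow> real"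
  assumes lsc: "\<And>k. cyl_lsc T (h k)"
    and decreasing: "\<And>k x. h (Suc k) x \<le> h k x"
    and INF_eq: "\<And>x. x \<in> branches T \<Longrightarrow> (INF k. h k x) = ereal (f x)"
begin

definition level :: "real \<Rightarrow> 'a list \<Rightarrow> nat" where
  "level q s = Max (insert 0 {m. m \<le> length s \<and> (\<forall>y\<in>cyl T s. ereal q < h m y)})"

lemma finite_levels: "finite (insert 0 {m. m \<le> length s \<and> (\<forall>y\<in>cyl T s. ereal q < h m y)})"
  by (rule finite_subset[of _ "{..length s}"]) auto

lemma level_ge: "m \<le> length s \<Longrightarrow> \<forall>y\<in>cyl T s. ereal q < h m y \<Longrightarrow> m \<le> level q s"
  unfolding level_def using finite_levels by (intro Max_ge) auto

lemma level_le_length: "level q s \<le> length s"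
  unfolding level_def using finite_levels by (intro Max.boundedI) auto

lemma less_h_level: "0 < level q s \<Longrightarrow> y \<in> cyl T s \<Longrightarrow> ereal q < h (level q s) y"
  using Max_in[OF finite_levels, of s q] unfolding level_def[symmetric] by auto

lemma mono_level: "mono (\<lambda>n. level q (init_seg x n))"
proof (rule incseq_SucI)
  fix n
  show "level q (init_seg x n) \<le> level q (init_seg x (Suc n))"
  proof (cases "level q (init_seg x n) = 0")
    case False
    then have "\<forall>y\<in>cyl T (init_seg x (Suc n)). ereal q < h (level q (init_seg x n)) y"
      using less_h_level[of q "init_seg x n"] cyl_init_seg_antimono[of n "Suc n" T x] by auto
    then show ?thesis
      using level_le_length[of q "init_seg x n"] by (intro level_ge) simp_all
  qed simp
qed

lemma h_antimono:
  assumes "k \<le> m"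
  shows "h m x \<le> h k x"
proof -
  have "decseq (\<lambda>k. h k x)"
    by (rule decseq_SucI) (rule decreasing)
  then show ?thesis
    using assms by (rule decseqD)
qed

lemma level_unbounded:
  assumes "x \<in> branches T" "q < f x"
  shows "\<exists>n. M \<le> level q (init_seg x n)"
proof -
  have "ereal q < ereal (f x)"
    using assms(2) by simp
  also have "\<dots> \<le> h M x"
    using INF_lower[of M UNIV "\<lambda>k. h k x"] INF_eq[OF assms(1)] by simp
  finally have "ereal q < h M x" .
  with lsc[of M] assms(1) obtain d where "\<forall>y\<in>cyl T (init_seg x d). ereal q < h M y"
    unfolding cyl_lsc_def by blast
  then have "\<forall>y\<in>cyl T (init_seg x (max M d)). ereal q < h M y"
    using cyl_init_seg_antimono[of d "max M d" T x] by auto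
  then have "M \<le> level q (init_seg x (max M d))"
    by (intro level_ge) simp_all
  then show ?thesis ..
qed

lemma less_h_if_level_large:
  assumes "x \<in> branches T" "Suc M \<le> level q (init_seg x n)"
  shows "ereal q < h M x"
proof -
  have "ereal q < h (level q (init_seg x n)) x"
    using assms by (intro less_h_level) (simp_all add: in_cyl_init_seg)
  also have "\<dots> \<le> h M x"
    using assms(2) by (intro h_antimono) simp
  finally show ?thesis .
qed

text \<open>Only nonempty lists matter here; the value at [] is junk.\<close>

definition jump_value :: "'a list \<Rightarrow> real" where
  "jump_value s = counter_jump_max (\<lambda>q n. level (real_of_rat q) (take n s)) (length s - 1)"

lemma jump_value_init_seg:
  "jump_value (init_seg x (Suc t)) = counter_jump_max (\<lambda>q n. level (real_of_rat q) (init_seg x n)) t"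
  unfolding jump_value_def counter_jump_max_def by (simp add: take_map take_upt del: upt_Suc)

lemma limsup_jump_value:
  assumes x: "x \<in> branches T"
  shows "limsup (\<lambda>t. ereal (jump_value (init_seg x (Suc t)))) = ereal (f x)"
proof -
  let ?c = "\<lambda>q n. level (real_of_rat q) (init_seg x n)"
  have mono: "mono (?c q)" for q
    by (rule mono_level)
  have bounded: "?c q n \<le> n" for q n
    using level_le_length[of "real_of_rat q" "init_seg x n"] by simp
  show ?thesis
    unfolding jump_value_init_seg
  proof (rule limsup_ereal_eqI)
    fix q assume "real_of_rat q < f x"
    then show "\<exists>\<^sub>F t in sequentially. real_of_rat q \<le> counter_jump_max ?c t"
      by (intro frequently_counter_jump_max_ge[OF mono bounded] level_unbounded[OF x])
  next
    fix r assume frequent: "\<exists>\<^sub>F t in sequentially. r \<le> counter_jump_max ?c t"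
    have "ereal r \<le> h M x" for M
    proof -
      obtain q n where "r \<le> real_of_rat q" "Suc M \<le> ?c q n"
        using frequently_counter_jump_max_ge_imp_large[OF mono bounded frequent] by blast
      then have "ereal r \<le> ereal (real_of_rat q)" "ereal (real_of_rat q) < h M x"
        using less_h_if_level_large[OF x] by simp_all
      then show ?thesis
        by (meson order.trans less_imp_le)
    qed
    then have "ereal r \<le> (INF k. h k x)"
      by (rule INF_greatest)
    with INF_eq[OF x] show "r \<le> f x"
      by simp
  qed
qed

end

lemma inf_of_lsc_seq_imp_limsup_function:
  assumes "inf_of_lsc_seq T f"
  shows "limsup_function T f"
proof -
  obtain h :: "nat \<Rightarrow> (nat \<Rightarrow> 'a) \<Rightarrow> ereal"
    where h: "\<And>k. cyl_lsc T (h k)" "\<And>k x. h (Suc k) x \<le> h k x"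
      "\<And>x. x \<in> branches T \<Longrightarrow> (INF k. h k x) = ereal (f x)"
    using inf_of_lsc_seq_decreasing[OF assms] by blast
  have "\<forall>x\<in>branches T. ereal (f x) = limsup (\<lambda>t. ereal (jump_value T h (init_seg x (Suc t))))"
    using limsup_jump_value[OF h] by simp
  then show ?thesis
    unfolding limsup_function_def by blast
qed

lemma limsup_function_iff_inf_of_lsc_seq: "limsup_function T f \<longleftrightarrow> inf_of_lsc_seq T f"
  using limsup_function_imp_inf_of_lsc_seq inf_of_lsc_seq_imp_limsup_function by blast

lemma good_collection_limsup_functions:
  "good_collection T {f \<in> branches T \<rightarrow>\<^sub>E (UNIV :: real set). limsup_function T f}"
  unfolding good_collection_def limsup_function_iff_inf_of_lsc_seq
proof (intro conjI allI impI ballI)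
  fix f assume "f \<in> branches T \<rightarrow>\<^sub>E (UNIV :: real set)" "lower_semicont (branch_topology T) f"
  then show "f \<in> {f \<in> branches T \<rightarrow>\<^sub>E UNIV. inf_of_lsc_seq T f}"
    by (simp add: lower_semicont_imp_inf_of_lsc_seq)
next
  fix fs and f :: "(nat \<Rightarrow> 'a) \<Rightarrow> real"
  assume "(\<forall>n. fs n \<in> {f \<in> branches T \<rightarrow>\<^sub>E UNIV. inf_of_lsc_seq T f})
      \<and> (\<forall>n. \<forall>x\<in>branches T. fs (Suc n) x \<le> fs n x)
      \<and> f \<in> branches T \<rightarrow>\<^sub>E UNIV \<and> (\<forall>x\<in>branches T. (\<lambda>n. fs n x) \<longlonglongrightarrow> f x)"
  then show "f \<in> {f \<in> branches T \<rightarrow>\<^sub>E UNIV. inf_of_lsc_seq T f}"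
    using inf_of_lsc_seq_decreasing_limit[of T fs f] by simp
qed auto

lemma limsup_functions_subset_good_collection:
  assumes "good_collection T C"
  shows "{f \<in> branches T \<rightarrow>\<^sub>E (UNIV :: real set). limsup_function T f} \<subseteq> C"
proof
  fix f assume "f \<in> {f \<in> branches T \<rightarrow>\<^sub>E (UNIV :: real set). limsup_function T f}"
  then have f: "f \<in> branches T \<rightarrow>\<^sub>E (UNIV :: real set)" "limsup_function T f"
    by simp_all
  obtain g where g: "\<And>n. g n \<in> branches T \<rightarrow>\<^sub>E (UNIV :: real set)"
    "\<And>n. lower_semicont (branch_topology T) (g n)"
    "\<And>n x. x \<in> branches T \<Longrightarrow> g (Suc n) x \<le> g n x"
    "\<And>x. x \<in> branches T \<Longrightarrow> (\<lambda>n. g n x) \<longlonglongrightarrow> f x"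
    using limsup_function_decreasing_lsc_limit[OF f(2)] by blast
  have lsc_in_C: "\<forall>f\<in>branches T \<rightarrow>\<^sub>E (UNIV :: real set). lower_semicont (branch_topology T) f \<longrightarrow> f \<in> C"
    using assms unfolding good_collection_def by (elim conjE)
  have limit_in_C: "\<forall>(fs :: nat \<Rightarrow> (nat \<Rightarrow> 'a) \<Rightarrow> real) f.
      (\<forall>n. fs n \<in> C) \<and> (\<forall>n. \<forall>x\<in>branches T. fs (Suc n) x \<le> fs n x)
      \<and> f \<in> branches T \<rightarrow>\<^sub>E (UNIV :: real set)
      \<and> (\<forall>x\<in>branches T. (\<lambda>n. fs n x) \<longlonglongrightarrow> f x) \<longrightarrow> f \<in> C"
    using assms unfolding good_collection_def by (elim conjE)
  have "g n \<in> C" for n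
    using lsc_in_C g(1,2) by blast
  with limit_in_C g(3,4) f(1) show "f \<in> C"
    by blast
qed

theorem mainTheorem3:
  fixes A :: "'a set" and T :: "'a list set"
  assumes "countable A" and "A \<noteq> {}" and "pruned_tree A T"
  defines "L \<equiv> {f \<in> branches T \<rightarrow>\<^sub>E (UNIV :: real set). limsup_function T f}"
  shows "good_collection T L \<and> (\<forall>C. good_collection T C \<longrightarrow> L \<subseteq> C)"
  unfolding L_def
  using good_collection_limsup_functions limsup_functions_subset_good_collection by blast

end
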